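(* Let $x_*$ be a feasible point of problem $(\mathcal{P})$ and $\mathcal{D}(x_* )=\partial F(x_* )+\mathcal{N}(x_* )+N_A(x_* )$. Then: (1) $0\in\mathcal{D}(x_* )$ if and only if for some $p\in\{1,\dots,d+1\}$ a $p$-point alternance exists at $x_*$; (2) if a complete (i.e. $(d+1)$-point) alternance exists at $x_*$, then $0\in\operatorname{int}\mathcal{D}(x_* )$ and $\partial F(x_* )\ne\{0\}$.
   Context: Setting: $A\subseteq\mathbb{R}^d$ nonempty closed convex; $Y$ real Banach space with dual $Y^*$, pairing $\langle\cdot,\cdot\rangle$; $K\subset Y$ nonempty closed convex cone; $W$ compact Hausdorff; $f:\mathbb{R}^d\times W\to\mathbb{R}$ differentiable in $x$ with $f,\nabla_xf$ jointly continuous; $G:\mathbb{R}^d\to Y$ continuously Fréchet differentiable. $F(x)=\max_\omega f(x,\omega)$, $W(x)=\{\omega:f(x,\omega)=F(x)\}$, $\partial F(x)=\operatorname{co}\{\nabla_xf(x,\omega):\omega\in W(x)\}$; problem $(\mathcal{P})$: minimise $F$ s.t. $G(x)\in K$, $x\in A$. $K^*=\{y^*:\langle y^*,y\rangle\le0\ \forall y\in K\}$; $\mathcal{N}(x)=\{[DG(x)]^*\lambda:\lambda\in K^*,\langle\lambda,G(x)\rangle=0\}$ where $\langle[DG(x)]^*\lambda,h\rangle=\langle\lambda,DG(x)h\rangle$; $N_A(x)$ is the normal cone of convex analysis to $A$ at $x$. Fix $Z\subset\mathbb{R}^d$ consisting of $d$ linearly independent vectors, and sets $\eta(x_* )\subseteq\mathcal{N}(x_*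 )$, $n_A(x_* )\subseteq N_A(x_* )$ whose convex conic hulls are $\mathcal{N}(x_* )$ and $N_A(x_* )$ respectively. A $p$-point alternance ($p\in\{1,\dots,d+1\}$) exists at $x_*$ if there exist $k_0\in\{1,\dots,p\}$, $i_0\in\{k_0,\dots,p\}$, vectors $V_1,\dots,V_{k_0}\in\{\nabla_xf(x_*,\omega):\omega\in W(x_* )\}$, $V_{k_0+1},\dots,V_{i_0}\in\eta(x_* )$, $V_{i_0+1},\dots,V_p\in n_A(x_* )$ (empty ranges allowed), and $V_{p+1},\dots,V_{d+1}\in Z$, such that $\Delta_s=\det[V_1,\dots,V_{s-1},V_{s+1},\dots,V_{d+1}]$ satisfy $\Delta_s\ne0$ for $s\le p$, $\operatorname{sign}\Delta_s=-\operatorname{sign}\Delta_{s+1}$ for $s\le p-1$, $\Delta_s=0$ for $s\ge p+1$. A $(d+1)$-point alternance is called complete. *)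

theory Defs
  imports "HOL-Analysis.Analysis"
begin

definition maxF :: "(real^'n \<Rightarrow> 'w \<Rightarrow> real) \<Rightarrow> 'w set \<Rightarrow> real^'n \<Rightarrow> real" where
  "maxF f W x = (SUP w\<in>W. f x w)"

definition active :: "(real^'n \<Rightarrow> 'w \<Rightarrow> real) \<Rightarrow> 'w set \<Rightarrow> real^'n \<Rightarrow> 'w set" where
  "active f W x = {w \<in> W. f x w = maxF f W x}"

definition active_grads :: "(real^'n \<Rightarrow> 'w \<Rightarrow> real) \<Rightarrow> (real^'n \<Rightarrow> 'w \<Rightarrow> real^'n) \<Rightarrow> 'w set \<Rightarrow> real^'n \<Rightarrow> (real^'n) set" where
  "active_grads f grad W x = {grad x w | w. w \<in> active f W x}"

definition subdiffF :: "(real^'n \<Rightarrow> 'w \<Rightarrow> real) \<Rightarrow> (real^'n \<Rightarrow> 'w \<Rightarrow> real^'n) \<Rightarrow> 'w set \<Rightarrow> real^'n \<Rightarrow> (real^'n) set" where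
  "subdiffF f grad W x = convex hull (active_grads f grad W x)"

text \<open>Dual cone K* = { y* : <y*, y> <= 0 for all y in K } (polar cone convention of the paper).\<close>
definition dual_cone :: "'y::real_normed_vector set \<Rightarrow> ('y \<Rightarrow>\<^sub>L real) set" where
  "dual_cone K = {l. \<forall>y\<in>K. blinfun_apply l y \<le> 0}"

text \<open>N(x) = { [DG(x)]^* l : l in K*, <l, G x> = 0 }, with the adjoint identified with a vector of R^d.\<close>
definition Ncone :: "(real^'n \<Rightarrow> 'y::real_normed_vector) \<Rightarrow> (real^'n \<Rightarrow> ((real^'n) \<Rightarrow>\<^sub>L 'y)) \<Rightarrow> 'y set \<Rightarrow> real^'n \<Rightarrow> (real^'n) set" where
  "Ncone G DG K x = {v. \<exists>l\<in>dual_cone K. blinfun_apply l (G x) = 0 \<and>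
        (\<forall>h. v \<bullet> h = blinfun_apply l (blinfun_apply (DG x) h))}"

definition normal_cone :: "(real^'n) set \<Rightarrow> real^'n \<Rightarrow> (real^'n) set" where
  "normal_cone A x = {v. \<forall>y\<in>A. v \<bullet> (y - x) \<le> 0}"

definition conic_hull :: "'a::real_vector set \<Rightarrow> 'a set" where
  "conic_hull S = {y. \<exists>T c. finite T \<and> T \<subseteq> S \<and> (\<forall>t\<in>T. 0 \<le> c t) \<and> y = (\<Sum>t\<in>T. c t *\<^sub>R t)}"

text \<open>Fixed enumeration of the coordinate index type by 1..d (the alternance conditions do not
  depend on its choice, since it changes every determinant by the same sign).\<close>
definition pos :: "'n::finite \<Rightarrow> nat" where
  "pos = (SOME h. bij_betw h (UNIV::'n set) {1..CARD('n)})"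

definition skip :: "nat \<Rightarrow> nat \<Rightarrow> nat" where
  "skip s j = (if j < s then j else Suc j)"

text \<open>Delta_s = det [V_1,...,V_{s-1},V_{s+1},...,V_{d+1}] (vectors as columns).\<close>
definition Delta :: "(nat \<Rightarrow> real^'n::finite) \<Rightarrow> nat \<Rightarrow> real" where
  "Delta V s = det ((\<chi> i c. V (skip s (pos c)) $ i) :: real^'n^'n)"

definition alternance :: "(real^'n::finite) set \<Rightarrow> (real^'n) set \<Rightarrow> (real^'n) set \<Rightarrow> (real^'n) set \<Rightarrow> nat \<Rightarrow> bool" where
  "alternance Gr eta nA Z p \<longleftrightarrow>
     (\<exists>k0 i0 (V :: nat \<Rightarrow> real^'n). 1 \<le> k0 \<and> k0 \<le> i0 \<and> i0 \<le> p \<and>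
        (\<forall>s\<in>{1..k0}. V s \<in> Gr) \<and>
        (\<forall>s\<in>{k0<..i0}. V s \<in> eta) \<and>
        (\<forall>s\<in>{i0<..p}. V s \<in> nA) \<and>
        (\<forall>s\<in>{p<..CARD('n)+1}. V s \<in> Z) \<and>
        (\<forall>s\<in>{1..p}. Delta V s \<noteq> 0) \<and>
        (\<forall>s\<in>{1..<p}. sgn (Delta V s) = - sgn (Delta V (Suc s))) \<and>
        (\<forall>s\<in>{p<..CARD('n)+1}. Delta V s = 0))"

end

(*
  If V_1, ..., V_(d+1) satisfy a linear relation sum_s g_s V_s = 0, Cramer's rule gives
  g_s Delta_(s+1) = - g_(s+1) Delta_s.  Hence nonzero Delta_1, ..., Delta_p of alternating signs
  (with Delta_s = 0 beyond p) amount to a relation with positive coefficients among V_1, ..., V_p,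
  and normalising the coefficients of the gradient block exhibits 0 as a point of D.
  Conversely, 0 in D is a nonnegative relation with a positive gradient coefficient; one of
  minimal support is a positive circuit, and completing its vectors by elements of Z to a basis
  yields an alternance.  For a complete alternance the V_s span R^d, so perturbing the positive
  coefficients reaches every point near 0, and V_1 is nonzero because Delta_2 is.
*)
theory Submission
  imports Defs
begin

section \<open>Linear algebra\<close>

lemma det_neq_0_iff_span_rows:
  fixes A :: "real^'n::finite^'n"
  shows "det A \<noteq> 0 \<longleftrightarrow> span (range (\<lambda>i. A $ i)) = UNIV"
proof -
  have rows: "rows A = range (\<lambda>i. A $ i)"
    by (auto simp: rows_def row_def)
  have "det A \<noteq> 0 \<longleftrightarrow> (\<exists>B :: real^'n^'n. B ** A = mat 1)"
    by (metis invertible_det_nz invertible_left_inverse)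
  then show ?thesis
    using matrix_left_invertible_span_rows[of A] by (simp add: rows)
qed

lemma det_replace_row:
  fixes A :: "real^'n::finite^'n"
  assumes "x \<in> span {A $ j | j. j \<noteq> k}"
  shows "det (\<chi> i. if i = k then t *\<^sub>R u + x else A $ i) = t * det (\<chi> i. if i = k then u else A $ i)"
proof -
  have "det (\<chi> i. if i = k then w + x else A $ i) = det (\<chi> i. if i = k then w else A $ i)" for w
  proof -
    let ?B = "(\<chi> i. if i = k then w else A $ i) :: real^'n^'n"
    have "{row j ?B | j. j \<noteq> k} = {A $ j | j. j \<noteq> k}"
      by (auto simp: row_def)
    with assms have "x \<in> vec.span {row j ?B | j. j \<noteq> k}"
      by (simp add: span_vec_eq)
    from det_row_span[OF this] show ?thesis
      by (simp add: row_def if_distrib cong: if_cong)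
  qed
  then have "det (\<chi> i. if i = k then t *\<^sub>R u + x else A $ i) = det (\<chi> i. if i = k then t *\<^sub>R u else A $ i)" .
  also have "\<dots> = t * det (\<chi> i. if i = k then u else A $ i)"
    using det_row_mul[of k t "\<lambda>_. u" "\<lambda>i. A $ i", unfolded scalar_mult_eq_scaleR] by simp
  finally show ?thesis .
qed

lemma in_span_imageE:
  fixes V :: "'i \<Rightarrow> 'a::real_vector"
  assumes "finite I" "y \<in> span (V ` I)"
  obtains u where "y = (\<Sum>i\<in>I. u i *\<^sub>R V i)"
proof -
  from assms(2) have "\<exists>u. y = (\<Sum>i\<in>I. u i *\<^sub>R V i)"
  proof (induction rule: span_induct_alt)
    case base
    show ?case by (rule exI[of _ "\<lambda>_. 0"]) simp
  next
    case (step c x y)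
    then obtain i0 u where "i0 \<in> I" "x = V i0" "y = (\<Sum>i\<in>I. u i *\<^sub>R V i)"
      by blast
    have "(\<lambda>i. (u i + (if i = i0 then c else 0)) *\<^sub>R V i)
        = (\<lambda>i. u i *\<^sub>R V i + (if i = i0 then c *\<^sub>R V i else 0))"
      by (auto simp: scaleR_add_left)
    then have "(\<Sum>i\<in>I. (u i + (if i = i0 then c else 0)) *\<^sub>R V i)
        = (\<Sum>i\<in>I. u i *\<^sub>R V i) + (\<Sum>i\<in>I. if i = i0 then c *\<^sub>R V i else 0)"
      by (simp only: sum.distrib)
    also have "\<dots> = c *\<^sub>R x + y"
      using assms(1) \<open>i0 \<in> I\<close> \<open>x = V i0\<close> \<open>y = _\<close> by simp
    finally have "c *\<^sub>R x + y = (\<Sum>i\<in>I. (u i + (if i = i0 then c else 0)) *\<^sub>R V i)"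
      by (rule sym)
    then show ?case by (rule exI[of _ "\<lambda>i. u i + (if i = i0 then c else 0)"])
  qed
  then show ?thesis using that by blast
qed

lemma independent_image_if_only_trivial_relation:
  fixes V :: "'i \<Rightarrow> 'a::real_vector"
  assumes I: "finite I" and triv: "\<And>e. (\<Sum>i\<in>I. e i *\<^sub>R V i) = 0 \<Longrightarrow> \<forall>i\<in>I. e i = 0"
  shows "inj_on V I" "independent (V ` I)"
proof -
  show inj: "inj_on V I"
  proof (rule inj_onI, rule ccontr)
    fix i j assume ij: "i \<in> I" "j \<in> I" "V i = V j" "i \<noteq> j"
    define e where "e k = (if k = i then 1 else if k = j then -1 else 0 :: real)" for k
    have "e k *\<^sub>R V k = (if k = i then V i else 0) - (if k = j then V j else 0)" for k
      using ij by (simp add: e_def)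
    then have "(\<Sum>k\<in>I. e k *\<^sub>R V k) = 0"
      using ij I by (simp add: sum_subtractf)
    then have "e i = 0"
      using triv ij(1) by blast
    then show False
      by (simp add: e_def)
  qed
  show "independent (V ` I)"
  proof (rule independent_if_scalars_zero)
    fix f x assume "(\<Sum>x\<in>V ` I. f x *\<^sub>R x) = 0" "x \<in> V ` I"
    then show "f x = 0"
      using triv[of "f \<circ> V"] by (auto simp: sum.reindex[OF inj])
  qed (use I in simp)
qed

lemma in_span_remove_if_relation:
  fixes V :: "'i \<Rightarrow> 'a::real_vector"
  assumes I: "finite I" and i: "i \<in> I" and g: "g i \<noteq> 0" and rel: "(\<Sum>j\<in>I. g j *\<^sub>R V j) = 0"
  shows "V i \<in> span (V ` (I - {i}))"
proof -
  have "g i *\<^sub>R V i + (\<Sum>j\<in>I - {i}. g j *\<^sub>R V j) = 0"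
    using rel I i by (simp add: sum.remove)
  then have "g i *\<^sub>R V i = - (\<Sum>j\<in>I - {i}. g j *\<^sub>R V j)"
    by (simp add: eq_neg_iff_add_eq_0)
  moreover have "V i = (1 / g i) *\<^sub>R (g i *\<^sub>R V i)"
    using g by simp
  ultimately have "V i = (- 1 / g i) *\<^sub>R (\<Sum>j\<in>I - {i}. g j *\<^sub>R V j)"
    by simp
  also have "\<dots> \<in> span (V ` (I - {i}))"
    by (intro span_mul span_sum span_base) auto
  finally show ?thesis .
qed

lemma independent_extend_to_basis:
  fixes B0 Z :: "'a::euclidean_space set"
  assumes B0: "independent B0" and Z: "span Z = UNIV"
  obtains Z' where "Z' \<subseteq> Z" "B0 \<inter> Z' = {}" "finite Z'" "span (B0 \<union> Z') = UNIV"
    "card B0 + card Z' = DIM('a)"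
proof -
  obtain B where B: "B0 \<subseteq> B" "B \<subseteq> B0 \<union> Z" "independent B" "B0 \<union> Z \<subseteq> span B"
    using maximal_independent_subset_extend[of B0 "B0 \<union> Z"] B0 by blast
  then have span_B: "span B = UNIV"
    using Z span_mono[of Z "span B"] by (auto simp: span_span)
  have fin_B: "finite B" and card_B: "card B = DIM('a)"
    using B(3) span_B independent_bound basis_card_eq_dim[of B UNIV] by auto
  have B_eq: "B0 \<union> (B - B0) = B"
    using B(1) by auto
  show ?thesis
  proof (rule that[of "B - B0"])
    show "B - B0 \<subseteq> Z"
      using B(2) by auto
    show "span (B0 \<union> (B - B0)) = UNIV"
      using span_B B_eq by simp
    have "finite B0"
      using fin_B B(1) finite_subset by blast
    then show "card B0 + card (B - B0) = DIM('a)"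
      using fin_B card_Un_disjoint[of B0 "B - B0"] B_eq card_B by simp
  qed (use fin_B in auto)
qed

lemma continuous_coordinates:
  fixes V :: "'i \<Rightarrow> 'a::euclidean_space"
  assumes I: "finite I" and span: "span (V ` I) = UNIV"
  obtains \<beta> where "\<And>i. continuous_on UNIV (\<lambda>y. \<beta> y i)" "\<And>i. \<beta> 0 i = 0"
    "\<And>y. (\<Sum>i\<in>I. \<beta> y i *\<^sub>R V i) = y"
proof -
  have "\<forall>b\<in>Basis. \<exists>c. b = (\<Sum>i\<in>I. c i *\<^sub>R V i)"
    using in_span_imageE[OF I] span by (metis UNIV_I)
  then obtain c where c: "\<And>b. b \<in> Basis \<Longrightarrow> b = (\<Sum>i\<in>I. c b i *\<^sub>R V i)"
    by metis
  define \<beta> where "\<beta> y i = (\<Sum>b\<in>Basis. (y \<bullet> b) * c b i)" for y i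
  have "(\<Sum>i\<in>I. \<beta> y i *\<^sub>R V i) = (\<Sum>i\<in>I. \<Sum>b\<in>Basis. (y \<bullet> b) *\<^sub>R (c b i *\<^sub>R V i))" for y
    by (simp add: \<beta>_def scaleR_sum_left)
  also have "\<dots> y = (\<Sum>b\<in>Basis. (y \<bullet> b) *\<^sub>R (\<Sum>i\<in>I. c b i *\<^sub>R V i))" for y
    by (simp add: sum.swap[of _ I] scaleR_sum_right)
  also have "\<dots> y = y" for y
    using c by (simp add: euclidean_representation)
  finally have "(\<Sum>i\<in>I. \<beta> y i *\<^sub>R V i) = y" for y .
  moreover have "continuous_on UNIV (\<lambda>y. \<beta> y i)" for i
    unfolding \<beta>_def by (intro continuous_intros)
  moreover have "\<beta> 0 i = 0" for i
    by (simp add: \<beta>_def)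
  ultimately show ?thesis
    using that by blast
qed

lemma convex_cone_sum:
  assumes C: "convex_cone C" and "\<And>i. i \<in> I \<Longrightarrow> 0 \<le> a i" "\<And>i. i \<in> I \<Longrightarrow> v i \<in> C"
  shows "(\<Sum>i\<in>I. a i *\<^sub>R v i) \<in> C"
  using assms(2,3)
proof (induction I rule: infinite_finite_induct)
  case (insert j I)
  then show ?case
    using C by (simp add: convex_cone_add convex_cone_scaleR)
qed (use C convex_cone_contains_0 in auto)

lemma ex_bij_betw_greaterThanAtMost:
  assumes "finite M" "n = m + card M"
  obtains h where "bij_betw h {m<..n} M"
proof -
  obtain h0 where h0: "bij_betw h0 {0..<card M} M"
    using ex_bij_betw_nat_finite[OF assms(1)] by blast
  have "bij_betw (\<lambda>s. s - Suc m) {m<..n} {0..<card M}"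
    by (rule bij_betwI[where g = "\<lambda>s. s + Suc m"]) (use assms(2) in auto)
  from bij_betw_trans[OF this h0] show ?thesis
    using that by blast
qed

section \<open>Positive circuits\<close>

definition positive_circuit :: "('i \<Rightarrow> 'a::real_vector) \<Rightarrow> 'i set \<Rightarrow> ('i \<Rightarrow> real) \<Rightarrow> bool" where
  "positive_circuit V I g \<longleftrightarrow> finite I \<and> (\<forall>i\<in>I. 0 < g i) \<and> (\<Sum>i\<in>I. g i *\<^sub>R V i) = 0 \<and>
     (\<forall>e. (\<Sum>i\<in>I. e i *\<^sub>R V i) = 0 \<longrightarrow> (\<exists>t. \<forall>i\<in>I. e i = t * g i))"

lemma positive_circuit_reindex:
  fixes V :: "'j \<Rightarrow> 'a::real_vector"
  assumes h: "bij_betw h I J" and circ: "positive_circuit V J g"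
  shows "positive_circuit (V \<circ> h) I (g \<circ> h)"
proof -
  have sum_h: "(\<Sum>i\<in>I. F (h i)) = (\<Sum>j\<in>J. F j)" for F :: "_ \<Rightarrow> 'a"
    using sum.reindex_bij_betw[OF h] .
  have "\<exists>t. \<forall>i\<in>I. e i = t * g (h i)" if e: "(\<Sum>i\<in>I. e i *\<^sub>R V (h i)) = 0" for e
  proof -
    define e' where "e' = e \<circ> inv_into I h"
    have e'_h: "e' (h i) = e i" if "i \<in> I" for i
      using bij_betw_inv_into_left[OF h that] by (simp add: e'_def)
    have "(\<Sum>j\<in>J. e' j *\<^sub>R V j) = (\<Sum>i\<in>I. e i *\<^sub>R V (h i))"
      unfolding sum_h[symmetric] by (rule sum.cong) (simp_all add: e'_h)
    with e obtain t where "\<forall>j\<in>J. e' j = t * g j"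
      using circ unfolding positive_circuit_def by (metis (no_types, lifting))
    then show ?thesis
      using h e'_h by (metis bij_betwE)
  qed
  moreover have "finite I" "\<forall>i\<in>I. 0 < g (h i)" "(\<Sum>i\<in>I. g (h i) *\<^sub>R V (h i)) = 0"
    using circ bij_betw_finite[OF h] bij_betwE[OF h] sum_h[of "\<lambda>j. g j *\<^sub>R V j"]
    by (auto simp: positive_circuit_def)
  ultimately show ?thesis
    by (simp add: positive_circuit_def)
qed

lemma positive_circuit_remove:
  fixes V :: "'i \<Rightarrow> 'a::real_vector"
  assumes circ: "positive_circuit V I g" and i: "i \<in> I"
  shows "inj_on V (I - {i})" "independent (V ` (I - {i}))"
proof -
  have I: "finite I" and g: "0 < g i"
    using circ i by (auto simp: positive_circuit_def)
  have "\<forall>j\<in>I - {i}. e j = 0" if e: "(\<Sum>j\<in>I - {i}. e j *\<^sub>R V j) = 0" for e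
  proof -
    define e' where "e' j = (if j = i then 0 else e j)" for j
    have "(\<Sum>j\<in>I. e' j *\<^sub>R V j) = (\<Sum>j\<in>I - {i}. e j *\<^sub>R V j)"
      using I i by (simp add: e'_def sum.remove)
    with e obtain t where t: "\<forall>j\<in>I. e' j = t * g j"
      using circ unfolding positive_circuit_def by (metis (no_types, lifting))
    then have "t = 0"
      using i g by (force simp: e'_def)
    then show ?thesis
      using t by (metis DiffE e'_def insertI1 mult_zero_left)
  qed
  then show "inj_on V (I - {i})" "independent (V ` (I - {i}))"
    using independent_image_if_only_trivial_relation[of "I - {i}" V] I by auto
qed

lemma nonproportional_relationE:
  fixes V :: "'i \<Rightarrow> 'a::real_vector"
  assumes c: "0 < c j0" "(\<Sum>j\<in>J. c j *\<^sub>R V j) = 0"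
    and e: "(\<Sum>j\<in>J. e j *\<^sub>R V j) = 0" "\<nexists>t. \<forall>j\<in>J. e j = t * c j"
  obtains f where "(\<Sum>j\<in>J. f j *\<^sub>R V j) = 0" "f j0 = 0" "\<exists>j\<in>J. 0 < f j"
proof -
  define f0 where "f0 j = e j - (e j0 / c j0) * c j" for j
  have "(\<Sum>j\<in>J. ((e j0 / c j0) * c j) *\<^sub>R V j) = (e j0 / c j0) *\<^sub>R (\<Sum>j\<in>J. c j *\<^sub>R V j)"
    by (simp add: scaleR_sum_right)
  then have f0_rel: "(\<Sum>j\<in>J. f0 j *\<^sub>R V j) = 0"
    unfolding f0_def scaleR_diff_left sum_subtractf using c e by simp
  have f0_j0: "f0 j0 = 0"
    using c(1) by (simp add: f0_def)
  have "\<exists>j\<in>J. f0 j \<noteq> 0"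
  proof (rule ccontr)
    assume "\<not> (\<exists>j\<in>J. f0 j \<noteq> 0)"
    then have "\<forall>j\<in>J. e j = (e j0 / c j0) * c j"
      by (auto simp: f0_def)
    with e(2) show False by blast
  qed
  show ?thesis
  proof (cases "\<exists>j\<in>J. 0 < f0 j")
    case True
    then show ?thesis using that f0_rel f0_j0 by blast
  next
    case False
    then have "\<exists>j\<in>J. 0 < - f0 j"
      using \<open>\<exists>j\<in>J. f0 j \<noteq> 0\<close> by force
    moreover have "(\<Sum>j\<in>J. (- f0 j) *\<^sub>R V j) = 0"
      using f0_rel by (simp add: sum_negf)
    ultimately show ?thesis
      using that[of "\<lambda>j. - f0 j"] f0_j0 by simp
  qed
qed

text \<open>Move from \<open>c\<close> along \<open>-f\<close> until the first coefficient vanishes.\<close>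

lemma positive_relation_shrink:
  fixes V :: "'i \<Rightarrow> 'a::real_vector"
  assumes J: "finite J" and c: "\<forall>j\<in>J. 0 < c j" "(\<Sum>j\<in>J. c j *\<^sub>R V j) = 0"
    and f: "(\<Sum>j\<in>J. f j *\<^sub>R V j) = 0" "f j0 = 0" "\<exists>j\<in>J. 0 < f j" and j0: "j0 \<in> J"
  obtains c' where "\<forall>j\<in>J. 0 \<le> c' j" "0 < c' j0" "\<exists>j\<in>J. c' j = 0" "(\<Sum>j\<in>J. c' j *\<^sub>R V j) = 0"
proof -
  have c_j0: "0 < c j0"
    using c(1) j0 by blast
  define S where "S = {j\<in>J. 0 < f j}"
  have S: "finite S" "S \<noteq> {}"
    using J f(3) by (auto simp: S_def)
  define t where "t = Min ((\<lambda>j. c j / f j) ` S)"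
  have "t \<in> (\<lambda>j. c j / f j) ` S"
    unfolding t_def using S by (intro Min_in) auto
  then obtain j1 where j1: "j1 \<in> S" "t = c j1 / f j1"
    by blast
  have t_le: "t \<le> c j / f j" if "j \<in> S" for j
    using S that by (simp add: t_def)
  have "0 < t"
    using j1 c(1) by (simp add: S_def)
  define c' where "c' j = c j - t * f j" for j
  have "0 \<le> c' j" if "j \<in> J" for j
  proof (cases "0 < f j")
    case True
    then show ?thesis
      using t_le[of j] that by (simp add: S_def c'_def pos_le_divide_eq)
  next
    case False
    then have "t * f j \<le> 0"
      using \<open>0 < t\<close> by (simp add: mult_nonneg_nonpos)
    moreover have "0 < c j"
      using c(1) that by blast
    ultimately show ?thesis
      by (simp add: c'_def)
  qed
  moreover have "0 < c' j0"
    using c_j0 f(2) by (simp add: c'_def)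
  moreover have "c' j1 = 0"
    using j1 by (simp add: S_def c'_def)
  moreover have "(\<Sum>j\<in>J. c' j *\<^sub>R V j) = 0"
    using c(2) f(1)
    by (simp add: c'_def scaleR_diff_left sum_subtractf scaleR_sum_right[symmetric] flip: scaleR_scaleR)
  ultimately show ?thesis
    using that j1(1) S_def by blast
qed

text \<open>A positive relation of minimal support is a circuit: a relation not proportional to it
  would shrink its support further.\<close>

lemma exists_positive_circuit:
  fixes V :: "'i \<Rightarrow> 'a::real_vector"
  assumes I: "finite I" and w: "\<forall>i\<in>I. 0 \<le> w i" "(\<Sum>i\<in>I. w i *\<^sub>R V i) = 0"
    and i1: "i1 \<in> I" "Q i1" "0 < w i1"
  obtains J g where "J \<subseteq> I" "\<exists>j\<in>J. Q j" "positive_circuit V J g"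
proof -
  define P where "P n \<longleftrightarrow> (\<exists>J c. J \<subseteq> I \<and> card J = n \<and> (\<exists>j\<in>J. Q j) \<and> (\<forall>j\<in>J. 0 < c j)
      \<and> (\<Sum>j\<in>J. c j *\<^sub>R V j) = 0)" for n
  have "(\<Sum>i\<in>{i\<in>I. 0 < w i}. w i *\<^sub>R V i) = (\<Sum>i\<in>I. w i *\<^sub>R V i)"
    by (rule sum.mono_neutral_left) (use I w in \<open>auto simp: less_le\<close>)
  then have "P (card {i\<in>I. 0 < w i})"
    unfolding P_def using w i1 by (intro exI[of _ "{i\<in>I. 0 < w i}"] exI[of _ w]) auto
  then have "P (LEAST n. P n)"
    by (rule LeastI)
  then obtain J c where J: "J \<subseteq> I" "card J = (LEAST n. P n)" "\<exists>j\<in>J. Q j" "\<forall>j\<in>J. 0 < c j"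
      "(\<Sum>j\<in>J. c j *\<^sub>R V j) = 0"
    unfolding P_def by blast
  have fin_J: "finite J"
    using I J(1) finite_subset by blast
  obtain j0 where j0: "j0 \<in> J" "Q j0"
    using J(3) by blast
  have "\<exists>t. \<forall>j\<in>J. e j = t * c j" if e: "(\<Sum>j\<in>J. e j *\<^sub>R V j) = 0" for e
  proof (rule ccontr)
    assume nonprop: "\<nexists>t. \<forall>j\<in>J. e j = t * c j"
    have "0 < c j0"
      using J(4) j0(1) by blast
    then obtain f where f: "(\<Sum>j\<in>J. f j *\<^sub>R V j) = 0" "f j0 = 0" "\<exists>j\<in>J. 0 < f j"
      using nonproportional_relationE[OF _ J(5) e nonprop] by blast
    then obtain c' where c': "\<forall>j\<in>J. 0 \<le> c' j" "0 < c' j0" "\<exists>j\<in>J. c' j = 0"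
        "(\<Sum>j\<in>J. c' j *\<^sub>R V j) = 0"
      using positive_relation_shrink[OF fin_J J(4,5) _ _ _ j0(1)] by blast
    define J' where "J' = {j\<in>J. 0 < c' j}"
    obtain j1 where "j1 \<in> J" "c' j1 = 0"
      using c'(3) by blast
    then have "J' \<subseteq> J" "j1 \<notin> J'"
      by (auto simp: J'_def)
    then have "J' \<subset> J"
      using \<open>j1 \<in> J\<close> by blast
    then have "card J' < card J"
      by (rule psubset_card_mono[OF fin_J])
    moreover have "(\<Sum>j\<in>J'. c' j *\<^sub>R V j) = (\<Sum>j\<in>J. c' j *\<^sub>R V j)"
      by (rule sum.mono_neutral_left) (use fin_J c'(1) in \<open>auto simp: J'_def less_le\<close>)
    then have "P (card J')"
      unfolding P_def using J(1) j0 c'(2,4)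
      by (intro exI[of _ J'] exI[of _ c']) (auto simp: J'_def)
    ultimately show False
      using J(2) not_less_Least by metis
  qed
  then have "positive_circuit V J c"
    using fin_J J(4,5) by (simp add: positive_circuit_def)
  then show ?thesis
    using that J(1,3) by blast
qed

section \<open>Sign patterns of the determinants\<close>

definition sign_alternating :: "(nat \<Rightarrow> real) \<Rightarrow> nat \<Rightarrow> bool" where
  "sign_alternating D p \<longleftrightarrow>
     (\<forall>s\<in>{1..p}. D s \<noteq> 0) \<and> (\<forall>s\<in>{1..<p}. sgn (D s) = - sgn (D (Suc s)))"

lemma pos_if_sign_alternating:
  fixes g D :: "nat \<Rightarrow> real"
  assumes rel: "\<And>s. s \<in> {1..<p} \<Longrightarrow> g s * D (Suc s) = - g (Suc s) * D s"
    and alt: "sign_alternating D p" and g_1: "0 < g 1" and s: "s \<in> {1..p}"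
  shows "0 < g s"
  using s
proof (induction s)
  case (Suc s)
  show ?case
  proof (cases "s = 0")
    case True
    then show ?thesis using g_1 by simp
  next
    case False
    then have s: "s \<in> {1..<p}" using Suc.prems by auto
    then have "sgn (g s) = 1" using Suc.IH by simp
    moreover have "sgn (g s) * sgn (D (Suc s)) = - sgn (g (Suc s)) * sgn (D s)"
      using arg_cong[OF rel[OF s], of sgn] by (simp add: sgn_mult)
    moreover have "sgn (D (Suc s)) = - sgn (D s)" "D s \<noteq> 0"
      using alt s by (auto simp: sign_alternating_def)
    ultimately have "sgn (D s) = sgn (g (Suc s)) * sgn (D s)" "sgn (D s) \<noteq> 0"
      by (simp_all add: sgn_0_0)
    then have "sgn (g (Suc s)) = 1"
      by simp
    then show ?thesis by (simp add: sgn_1_pos)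
  qed
qed simp

lemma sign_alternating_if_pos:
  fixes g D :: "nat \<Rightarrow> real"
  assumes rel: "\<And>s. s \<in> {1..<p} \<Longrightarrow> g s * D (Suc s) = - g (Suc s) * D s"
    and g: "\<forall>s\<in>{1..p}. 0 < g s" and D_1: "D 1 \<noteq> 0"
  shows "sign_alternating D p"
proof -
  have "D s \<noteq> 0" if "s \<in> {1..p}" for s
    using that
  proof (induction s)
    case (Suc s)
    then show ?case
      using D_1 g[rule_format, of "Suc s"] rel[of s] by (cases "s = 0") auto
  qed simp
  moreover have "sgn (D s) = - sgn (D (Suc s))" if s: "s \<in> {1..<p}" for s
  proof -
    have "sgn (g s) * sgn (D (Suc s)) = - sgn (g (Suc s)) * sgn (D s)"
      using arg_cong[OF rel[OF s], of sgn] by (simp add: sgn_mult)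
    then show ?thesis using g s by simp
  qed
  ultimately show ?thesis
    by (simp add: sign_alternating_def)
qed

lemma bij_betw_pos: "bij_betw (pos :: 'n::finite \<Rightarrow> nat) UNIV {1..CARD('n)}"
proof -
  obtain h where h: "bij_betw h (UNIV :: 'n set) {0..<CARD('n)}"
    using ex_bij_betw_finite_nat[of "UNIV :: 'n set"] by auto
  have "bij_betw Suc {0..<CARD('n)} {1..CARD('n)}"
    by (simp add: bij_betw_def atLeastLessThanSuc_atLeastAtMost)
  from bij_betw_trans[OF h this] have "bij_betw (Suc \<circ> h) (UNIV :: 'n set) {1..CARD('n)}" .
  then have "\<exists>h. bij_betw h (UNIV :: 'n set) {1..CARD('n)}" by blast
  then show ?thesis unfolding pos_def by (rule someI_ex)
qed

lemma pos_surj: "j \<in> {1..CARD('n)} \<Longrightarrow> \<exists>c :: 'n::finite. pos c = j"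
  using bij_betw_pos[where 'n='n] unfolding bij_betw_def by (metis rangeE)

lemma bij_betw_skip_pos:
  assumes "s \<in> {1..CARD('n)+1}"
  shows "bij_betw (\<lambda>c :: 'n::finite. skip s (pos c)) UNIV ({1..CARD('n)+1} - {s})"
proof -
  have "bij_betw (skip s) {1..CARD('n)} ({1..CARD('n)+1} - {s})"
  proof (rule bij_betwI[where g = "\<lambda>j. if j < s then j else j - 1"])
    show "skip s \<in> {1..CARD('n)} \<rightarrow> {1..CARD('n)+1} - {s}"
      by (auto simp: skip_def)
    show "(\<lambda>j. if j < s then j else j - 1) \<in> {1..CARD('n)+1} - {s} \<rightarrow> {1..CARD('n)}"
      using assms by (auto split: if_splits)
  qed (auto simp: skip_def split: if_splits)
  from bij_betw_trans[OF bij_betw_pos this] show ?thesis by (simp add: o_def)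
qed

definition Delta_matrix :: "(nat \<Rightarrow> real^'n::finite) \<Rightarrow> nat \<Rightarrow> real^'n^'n" where
  "Delta_matrix V s = (\<chi> c. V (skip s (pos c)))"

lemma Delta_eq_det_Delta_matrix: "Delta V s = det (Delta_matrix V s)"
proof -
  have "(\<chi> i c. V (skip s (pos c)) $ i) = transpose (Delta_matrix V s)"
    by (simp add: Delta_matrix_def transpose_def)
  then show ?thesis by (simp add: Delta_def)
qed

lemma Delta_matrix_other_rows:
  fixes V :: "nat \<Rightarrow> real^'n::finite"
  assumes "s \<in> {1..CARD('n)+1}"
  shows "{Delta_matrix V s $ c | c. c \<noteq> k} = V ` ({1..CARD('n)+1} - {s, skip s (pos k)})"
proof -
  have "(\<lambda>c. skip s (pos c)) ` (UNIV - {k}) = ({1..CARD('n)+1} - {s}) - {skip s (pos k)}"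
    using bij_betw_skip_pos[OF assms] by (simp add: bij_betw_def image_set_diff)
  then have "{skip s (pos c) | c :: 'n. c \<noteq> k} = {1..CARD('n)+1} - {s, skip s (pos k)}"
    by blast
  moreover have "{Delta_matrix V s $ c | c. c \<noteq> k} = V ` {skip s (pos c) | c :: 'n. c \<noteq> k}"
    by (auto simp: Delta_matrix_def)
  ultimately show ?thesis
    by simp
qed

lemma range_Delta_matrix_rows:
  fixes V :: "nat \<Rightarrow> real^'n::finite"
  assumes "s \<in> {1..CARD('n)+1}"
  shows "range (\<lambda>c. Delta_matrix V s $ c) = V ` ({1..CARD('n)+1} - {s})"
proof -
  have "range (\<lambda>c. Delta_matrix V s $ c) = V ` range (\<lambda>c :: 'n. skip s (pos c))"
    by (simp add: Delta_matrix_def image_image)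
  also have "range (\<lambda>c :: 'n. skip s (pos c)) = {1..CARD('n)+1} - {s}"
    using bij_betw_skip_pos[OF assms] by (simp add: bij_betw_def)
  finally show ?thesis .
qed

lemma Delta_neq_0_iff_span:
  fixes V :: "nat \<Rightarrow> real^'n::finite"
  assumes "s \<in> {1..CARD('n)+1}"
  shows "Delta V s \<noteq> 0 \<longleftrightarrow> span (V ` ({1..CARD('n)+1} - {s})) = UNIV"
  by (simp add: Delta_eq_det_Delta_matrix det_neq_0_iff_span_rows range_Delta_matrix_rows[OF assms])

text \<open>The matrices of \<open>Delta V s\<close> and \<open>Delta V (Suc s)\<close> differ only in the row holding
  \<open>V (Suc s)\<close>, resp. \<open>V s\<close>; modulo the common rows the relation turns \<open>g s *\<^sub>R V s\<close> into
  \<open>- g (Suc s) *\<^sub>R V (Suc s)\<close>.\<close>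

lemma Delta_adjacent:
  fixes V :: "nat \<Rightarrow> real^'n::finite"
  assumes rel: "(\<Sum>j\<in>{1..CARD('n)+1}. g j *\<^sub>R V j) = 0" and s: "s \<in> {1..CARD('n)}"
  shows "g s * Delta V (Suc s) = - g (Suc s) * Delta V s"
proof -
  obtain k :: 'n where k: "pos k = s" using pos_surj s by blast
  define R where "R = Delta_matrix V (Suc s)"
  have R_k: "(\<chi> c. if c = k then V s else R $ c) = R"
    by (simp add: vec_eq_iff R_def Delta_matrix_def k skip_def)
  have R_other: "{R $ c | c. c \<noteq> k} = V ` ({1..CARD('n)+1} - {s, Suc s})"
    using Delta_matrix_other_rows[of "Suc s" V k] s by (simp add: R_def k skip_def insert_commute)
  have "skip s (pos c) = skip (Suc s) (pos c)" if "c \<noteq> k" for c :: 'n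
  proof -
    have "pos c \<noteq> s"
      using that k bij_betw_pos[where 'n='n] by (metis bij_betw_def injD)
    then show ?thesis by (auto simp: skip_def)
  qed
  moreover have "skip s (pos k) = Suc s"
    by (simp add: k skip_def)
  ultimately have Delta_matrix_s: "Delta_matrix V s = (\<chi> c. if c = k then V (Suc s) else R $ c)"
    by (auto simp: vec_eq_iff R_def Delta_matrix_def)
  define w where "w = (\<Sum>j\<in>{1..CARD('n)+1} - {s, Suc s}. g j *\<^sub>R V j)"
  have decomp: "{1..CARD('n)+1} = insert s (insert (Suc s) ({1..CARD('n)+1} - {s, Suc s}))"
    using s by auto
  have "(\<Sum>j\<in>{1..CARD('n)+1}. g j *\<^sub>R V j) = g s *\<^sub>R V s + (g (Suc s) *\<^sub>R V (Suc s) + w)"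
    unfolding w_def by (subst decomp) simp
  then have "g s *\<^sub>R V s + (g (Suc s) *\<^sub>R V (Suc s) + w) = 0"
    using rel by simp
  then have split: "g s *\<^sub>R V s + 0 = (- g (Suc s)) *\<^sub>R V (Suc s) + - w"
    by (simp add: algebra_simps eq_neg_iff_add_eq_0)
  have "- w \<in> span {R $ c | c. c \<noteq> k}"
    unfolding R_other w_def by (intro span_neg span_sum span_mul span_base) auto
  then have "det (\<chi> c. if c = k then (- g (Suc s)) *\<^sub>R V (Suc s) + - w else R $ c)
      = - g (Suc s) * Delta V s"
    by (simp add: det_replace_row Delta_eq_det_Delta_matrix Delta_matrix_s)
  moreover have "det (\<chi> c. if c = k then g s *\<^sub>R V s + 0 else R $ c) = g s * Delta V (Suc s)"
    by (subst det_replace_row) (auto simp: span_zero Delta_eq_det_Delta_matrix R_def[symmetric] R_k)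
  ultimately show ?thesis
    by (simp only: split)
qed

text \<open>Replacing the row \<open>V 1\<close> of the matrix of \<open>Delta V s\<close> by \<open>V s\<close> permutes the rows of
  the matrix of \<open>Delta V 1\<close>.\<close>

lemma Delta_eq_0_iff_coeff:
  fixes V :: "nat \<Rightarrow> real^'n::finite"
  assumes s: "s \<in> {2..CARD('n)+1}" and Delta_1: "Delta V 1 \<noteq> 0"
    and b: "V 1 - b *\<^sub>R V s \<in> span (V ` ({2..CARD('n)+1} - {s}))"
  shows "Delta V s = 0 \<longleftrightarrow> b = 0"
proof -
  obtain k :: 'n where k: "pos k = 1" using pos_surj by force
  define R where "R = Delta_matrix V s"
  have R_k: "(\<chi> c. if c = k then b *\<^sub>R V s + (V 1 - b *\<^sub>R V s) else R $ c) = R"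
    using s by (simp add: vec_eq_iff R_def Delta_matrix_def k skip_def)
  have "{1..CARD('n)+1} - {s, skip s (pos k)} = {2..CARD('n)+1} - {s}"
    using s by (auto simp: k skip_def)
  then have R_other: "{R $ c | c. c \<noteq> k} = V ` ({2..CARD('n)+1} - {s})"
    using Delta_matrix_other_rows[of s V k] s by (simp add: R_def)
  define M where "M = (\<chi> c. if c = k then V s else R $ c)"
  have "Delta V s = det R"
    by (simp add: Delta_eq_det_Delta_matrix R_def)
  also have "\<dots> = det (\<chi> c. if c = k then b *\<^sub>R V s + (V 1 - b *\<^sub>R V s) else R $ c)"
    by (simp only: R_k)
  also have "\<dots> = b * det M"
    unfolding M_def by (rule det_replace_row) (use b in \<open>simp add: R_other\<close>)
  finally have "Delta V s = b * det M" .
  moreover have "range (\<lambda>c. M $ c) = insert (V s) {R $ c | c. c \<noteq> k}"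
    by (auto simp: M_def)
  then have "range (\<lambda>c. M $ c) = V ` ({1..CARD('n)+1} - {1})"
    using s by (auto simp: R_other)
  then have "det M \<noteq> 0"
    using Delta_1 Delta_neq_0_iff_span[of 1 V] by (simp add: det_neq_0_iff_span_rows)
  ultimately show ?thesis
    by simp
qed

lemma positive_relation_if_sign_alternating:
  fixes V :: "nat \<Rightarrow> real^'n::finite"
  assumes p: "p \<in> {1..CARD('n)+1}" and alt: "sign_alternating (Delta V) p"
    and zero: "\<forall>s\<in>{p<..CARD('n)+1}. Delta V s = 0"
  obtains g where "\<forall>s\<in>{1..p}. 0 < g s" "(\<Sum>s\<in>{1..p}. g s *\<^sub>R V s) = 0"
proof -
  have Delta_1: "Delta V 1 \<noteq> 0"
    using alt p by (simp add: sign_alternating_def)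
  moreover have "{1..CARD('n)+1} - {1} = {2..CARD('n)+1}"
    by auto
  ultimately have "span (V ` {2..CARD('n)+1}) = UNIV"
    using Delta_neq_0_iff_span[of 1 V] by simp
  then obtain u where u: "V 1 = (\<Sum>i\<in>{2..CARD('n)+1}. u i *\<^sub>R V i)"
    by (metis UNIV_I finite_atLeastAtMost in_span_imageE)
  define g where "g s = (if s = 1 then 1 else - u s)" for s
  have "(\<Sum>s\<in>{2..CARD('n)+1}. g s *\<^sub>R V s) = - V 1"
    unfolding u g_def by (simp add: sum_negf)
  moreover have "{1..CARD('n)+1} = insert 1 {2..CARD('n)+1}"
    by auto
  ultimately have rel: "(\<Sum>s\<in>{1..CARD('n)+1}. g s *\<^sub>R V s) = 0"
    by (simp add: g_def)
  have g_zero: "g s = 0" if s: "s \<in> {p<..CARD('n)+1}" for s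
  proof -
    have s2: "s \<in> {2..CARD('n)+1}" using s p by auto
    then have "(\<Sum>i\<in>{2..CARD('n)+1}. u i *\<^sub>R V i)
        = u s *\<^sub>R V s + (\<Sum>i\<in>{2..CARD('n)+1} - {s}. u i *\<^sub>R V i)"
      by (intro sum.remove) auto
    then have "V 1 - u s *\<^sub>R V s = (\<Sum>i\<in>{2..CARD('n)+1} - {s}. u i *\<^sub>R V i)"
      unfolding u by (rule ssubst) (rule add_diff_cancel_left')
    also have "\<dots> \<in> span (V ` ({2..CARD('n)+1} - {s}))"
      by (intro span_sum span_mul span_base) auto
    finally have "u s = 0"
      using Delta_eq_0_iff_coeff[OF s2 Delta_1] zero s by blast
    then show ?thesis using s2 by (simp add: g_def)
  qed
  have "g s * Delta V (Suc s) = - g (Suc s) * Delta V s" if "s \<in> {1..<p}" for s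
    using Delta_adjacent[OF rel, of s] that p by auto
  from pos_if_sign_alternating[OF this alt] have "\<forall>s\<in>{1..p}. 0 < g s"
    by (simp add: g_def)
  moreover have "(\<Sum>s\<in>{1..p}. g s *\<^sub>R V s) = (\<Sum>s\<in>{1..CARD('n)+1}. g s *\<^sub>R V s)"
    by (rule sum.mono_neutral_left) (use p g_zero in auto)
  ultimately show ?thesis
    using that rel by metis
qed

lemma sign_alternating_if_positive_relation:
  fixes V :: "nat \<Rightarrow> real^'n::finite"
  assumes p: "p \<in> {1..CARD('n)+1}" and Delta_1: "Delta V 1 \<noteq> 0"
    and g: "\<forall>s\<in>{1..p}. 0 < g s" "(\<Sum>s\<in>{1..p}. g s *\<^sub>R V s) = 0"
  shows "sign_alternating (Delta V) p" "\<forall>s\<in>{p<..CARD('n)+1}. Delta V s = 0"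
proof -
  define g' where "g' s = (if s \<le> p then g s else 0)" for s
  have "(\<Sum>s\<in>{1..CARD('n)+1}. g' s *\<^sub>R V s) = (\<Sum>s\<in>{1..p}. g s *\<^sub>R V s)"
    by (rule sum.mono_neutral_cong_right) (use p in \<open>auto simp: g'_def\<close>)
  then have rel: "(\<Sum>s\<in>{1..CARD('n)+1}. g' s *\<^sub>R V s) = 0"
    using g(2) by simp
  have "g' s * Delta V (Suc s) = - g' (Suc s) * Delta V s" if "s \<in> {1..<p}" for s
    using Delta_adjacent[OF rel, of s] that p by auto
  moreover have "\<forall>s\<in>{1..p}. 0 < g' s"
    using g(1) by (simp add: g'_def)
  ultimately show "sign_alternating (Delta V) p"
    using Delta_1 by (rule sign_alternating_if_pos)
  have "0 < g 1"
    using g(1) p by simp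
  moreover have "{1..p} - {1} = {2..p}"
    by auto
  ultimately have head: "V 1 \<in> span (V ` {2..p})"
    using in_span_remove_if_relation[of "{1..p}" 1 g V] g(2) p by simp
  show "\<forall>s\<in>{p<..CARD('n)+1}. Delta V s = 0"
  proof
    fix s assume s: "s \<in> {p<..CARD('n)+1}"
    then have "V ` {2..p} \<subseteq> V ` ({2..CARD('n)+1} - {s})"
      by (intro image_mono) auto
    then have "span (V ` {2..p}) \<subseteq> span (V ` ({2..CARD('n)+1} - {s}))"
      by (rule span_mono)
    with head have "V 1 - 0 *\<^sub>R V s \<in> span (V ` ({2..CARD('n)+1} - {s}))"
      by auto
    then show "Delta V s = 0"
      using Delta_eq_0_iff_coeff[of s V 0] s p Delta_1 by simp
  qed
qed

lemma sign_alternating_extension: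
  fixes V0 :: "nat \<Rightarrow> real^'n::finite"
  assumes circ: "positive_circuit V0 {1..p} g" and p: "1 \<le> p"
    and Z: "finite Z" "card Z = CARD('n)" "independent Z"
  obtains V where "p \<le> CARD('n)+1" "\<forall>s\<in>{1..p}. V s = V0 s" "\<forall>s\<in>{p<..CARD('n)+1}. V s \<in> Z"
    "sign_alternating (Delta V) p" "\<forall>s\<in>{p<..CARD('n)+1}. Delta V s = 0"
proof -
  define B0 where "B0 = V0 ` {2..p}"
  have "{1..p} - {1} = {2..p}"
    by auto
  then have inj: "inj_on V0 {2..p}" and indep: "independent B0"
    using positive_circuit_remove[OF circ, of 1] p by (simp_all add: B0_def)
  have "span Z = UNIV"
    using card_eq_dim[of Z UNIV] Z by auto
  then obtain Z' where Z': "Z' \<subseteq> Z" "B0 \<inter> Z' = {}" "finite Z'" "span (B0 \<union> Z') = UNIV"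
      "card B0 + card Z' = DIM(real^'n)"
    by (rule independent_extend_to_basis[OF indep])
  have "card B0 = p - 1"
    using inj by (simp add: B0_def card_image)
  then have p_le: "p \<le> CARD('n)+1" and card_Z': "CARD('n)+1 = p + card Z'"
    using Z'(5) p by auto
  obtain h where h: "bij_betw h {p<..CARD('n)+1} Z'"
    using ex_bij_betw_greaterThanAtMost[OF Z'(3) card_Z'] by blast
  define V where "V s = (if s \<le> p then V0 s else h s)" for s
  have V_head: "V ` {2..p} = B0"
    by (auto simp: V_def B0_def)
  have V_tail: "V ` {p<..CARD('n)+1} = Z'"
    using h by (auto simp: V_def bij_betw_def image_def)
  have "{1..CARD('n)+1} - {1} = {2..p} \<union> {p<..CARD('n)+1}"
    using p p_le by auto
  then have "span (V ` ({1..CARD('n)+1} - {1})) = UNIV"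
    by (simp only: image_Un V_head V_tail Z'(4))
  then have Delta_1: "Delta V 1 \<noteq> 0"
    using Delta_neq_0_iff_span[of 1 V] by simp
  have V_V0: "\<forall>s\<in>{1..p}. V s = V0 s"
    by (simp add: V_def)
  then have g: "\<forall>s\<in>{1..p}. 0 < g s" "(\<Sum>s\<in>{1..p}. g s *\<^sub>R V s) = 0"
    using circ by (simp_all add: positive_circuit_def)
  have "p \<in> {1..CARD('n)+1}"
    using p p_le by simp
  note alt = sign_alternating_if_positive_relation[OF this Delta_1 g]
  have "\<forall>s\<in>{p<..CARD('n)+1}. V s \<in> Z"
    using V_tail Z'(1) by blast
  from that[OF p_le V_V0 this alt] show ?thesis .
qed

section \<open>Alternances and the set D\<close>

definition in_blocks :: "(nat \<Rightarrow> 'a) \<Rightarrow> nat \<Rightarrow> nat \<Rightarrow> nat \<Rightarrow> 'a set \<Rightarrow> 'a set \<Rightarrow> 'a set \<Rightarrow> bool" where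
  "in_blocks V k i p A B C \<longleftrightarrow> 1 \<le> k \<and> k \<le> i \<and> i \<le> p \<and>
     (\<forall>s\<in>{1..k}. V s \<in> A) \<and> (\<forall>s\<in>{k<..i}. V s \<in> B) \<and> (\<forall>s\<in>{i<..p}. V s \<in> C)"

lemma in_blocks_mono:
  "in_blocks V k i p A B C \<Longrightarrow> B \<subseteq> B' \<Longrightarrow> C \<subseteq> C' \<Longrightarrow> in_blocks V k i p A B' C'"
  unfolding in_blocks_def by blast

lemma alternance_iff:
  "alternance Gr eta nA Z p \<longleftrightarrow>
     (\<exists>k i V. in_blocks V k i p Gr eta nA \<and> (\<forall>s\<in>{p<..CARD('n)+1}. V s \<in> Z) \<and>
        sign_alternating (Delta V) p \<and> (\<forall>s\<in>{p<..CARD('n)+1}. Delta V s = 0))"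
  for Z :: "(real^'n::finite) set"
  unfolding alternance_def in_blocks_def sign_alternating_def by blast

lemma convex_cone_normal_cone: "convex_cone (normal_cone A x)"
  unfolding convex_cone_iff normal_cone_def
  by (auto simp: inner_add_left intro: add_nonpos_nonpos mult_nonneg_nonpos)

lemma convex_cone_Ncone: "convex_cone (Ncone G DG K x)"
  unfolding convex_cone_iff
proof (intro conjI ballI allI impI)
  show "0 \<in> Ncone G DG K x"
    unfolding Ncone_def dual_cone_def by (intro CollectI bexI[of _ 0]) auto
next
  fix a b assume "a \<in> Ncone G DG K x" "b \<in> Ncone G DG K x"
  then obtain l1 l2 where l: "l1 \<in> dual_cone K" "l1 (G x) = 0" "\<forall>h. a \<bullet> h = l1 (DG x h)"
      "l2 \<in> dual_cone K" "l2 (G x) = 0" "\<forall>h. b \<bullet> h = l2 (DG x h)"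
    unfolding Ncone_def by blast
  then have "l1 + l2 \<in> dual_cone K"
    by (auto simp: dual_cone_def blinfun.add_left intro: add_nonpos_nonpos)
  with l show "a + b \<in> Ncone G DG K x"
    unfolding Ncone_def by (intro CollectI bexI[of _ "l1 + l2"]) (auto simp: blinfun.add_left inner_add_left)
next
  fix a and c :: real assume "a \<in> Ncone G DG K x" "0 \<le> c"
  then obtain l where l: "l \<in> dual_cone K" "l (G x) = 0" "\<forall>h. a \<bullet> h = l (DG x h)"
    unfolding Ncone_def by blast
  with \<open>0 \<le> c\<close> have "c *\<^sub>R l \<in> dual_cone K"
    by (auto simp: dual_cone_def blinfun.scaleR_left mult_nonneg_nonpos)
  with l show "c *\<^sub>R a \<in> Ncone G DG K x"
    unfolding Ncone_def by (intro CollectI bexI[of _ "c *\<^sub>R l"]) (auto simp: blinfun.scaleR_left)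
qed

lemma in_blocks_combination_mem:
  assumes blocks: "in_blocks V k i p Gr N1 N2" and N: "convex_cone N1" "convex_cone N2"
    and a: "\<forall>s\<in>{1..p}. 0 \<le> a s" "(\<Sum>s\<in>{1..k}. a s) = 1"
  shows "(\<Sum>s\<in>{1..p}. a s *\<^sub>R V s) \<in> {x + y + z | x y z. x \<in> convex hull Gr \<and> y \<in> N1 \<and> z \<in> N2}"
proof -
  have ord: "k \<le> i" "i \<le> p"
    using blocks by (auto simp: in_blocks_def)
  have decomp: "{1..p} = ({1..k} \<union> {k<..i}) \<union> {i<..p}"
    using ord by auto
  have "(\<Sum>s\<in>{1..p}. a s *\<^sub>R V s) =
      (\<Sum>s\<in>{1..k} \<union> {k<..i}. a s *\<^sub>R V s) + (\<Sum>s\<in>{i<..p}. a s *\<^sub>R V s)"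
    unfolding decomp by (rule sum.union_disjoint) (use ord in auto)
  also have "(\<Sum>s\<in>{1..k} \<union> {k<..i}. a s *\<^sub>R V s) =
      (\<Sum>s\<in>{1..k}. a s *\<^sub>R V s) + (\<Sum>s\<in>{k<..i}. a s *\<^sub>R V s)"
    by (rule sum.union_disjoint) (use ord in auto)
  finally have "(\<Sum>s\<in>{1..p}. a s *\<^sub>R V s) =
      (\<Sum>s\<in>{1..k}. a s *\<^sub>R V s) + (\<Sum>s\<in>{k<..i}. a s *\<^sub>R V s) + (\<Sum>s\<in>{i<..p}. a s *\<^sub>R V s)" .
  moreover have "(\<Sum>s\<in>{1..k}. a s *\<^sub>R V s) \<in> convex hull Gr"
    using a blocks ord by (intro convex_sum) (auto simp: in_blocks_def intro: hull_inc)
  moreover have "(\<Sum>s\<in>{k<..i}. a s *\<^sub>R V s) \<in> N1" "(\<Sum>s\<in>{i<..p}. a s *\<^sub>R V s) \<in> N2"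
    using a blocks ord by (auto simp: in_blocks_def intro!: convex_cone_sum N)
  ultimately show ?thesis
    by blast
qed

lemma zero_in_sum_set_if_positive_relation:
  assumes blocks: "in_blocks V k i p Gr N1 N2" and N: "convex_cone N1" "convex_cone N2"
    and g: "\<forall>s\<in>{1..p}. 0 < g s" "(\<Sum>s\<in>{1..p}. g s *\<^sub>R V s) = 0"
  shows "0 \<in> {x + y + z | x y z. x \<in> convex hull Gr \<and> y \<in> N1 \<and> z \<in> N2}"
proof -
  define \<gamma> where "\<gamma> = (\<Sum>s\<in>{1..k}. g s)"
  have "0 < \<gamma>"
    using blocks g(1) unfolding \<gamma>_def in_blocks_def by (intro sum_pos) auto
  then have "(\<Sum>s\<in>{1..p}. (g s / \<gamma>) *\<^sub>R V s) \<in> {x + y + z | x y z. x \<in> convex hull Gr \<and> y \<in> N1 \<and> z \<in> N2}"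
    using blocks g(1) by (intro in_blocks_combination_mem[OF blocks N])
      (auto simp: \<gamma>_def in_blocks_def sum_divide_distrib[symmetric] less_imp_le)
  moreover have "(\<Sum>s\<in>{1..p}. (g s / \<gamma>) *\<^sub>R V s) = (1 / \<gamma>) *\<^sub>R (\<Sum>s\<in>{1..p}. g s *\<^sub>R V s)"
    by (simp add: scaleR_sum_right)
  ultimately show ?thesis
    using g(2) by simp
qed

text \<open>For \<open>y\<close> near \<open>0\<close>, adding continuous coordinates of \<open>y\<close> to the positive coefficients
  and renormalising the first block keeps all coefficients positive.\<close>

lemma zero_in_interior_sum_set:
  assumes blocks: "in_blocks V k i p Gr N1 N2" and N: "convex_cone N1" "convex_cone N2"
    and g: "\<forall>s\<in>{1..p}. 0 < g s" "(\<Sum>s\<in>{1..p}. g s *\<^sub>R V s) = 0"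
    and span: "span (V ` {1..p}) = (UNIV :: 'a::euclidean_space set)"
  shows "0 \<in> interior {x + y + z | x y z. x \<in> convex hull Gr \<and> y \<in> N1 \<and> z \<in> N2}"
proof -
  obtain \<beta> where \<beta>: "\<And>s. continuous_on UNIV (\<lambda>y. \<beta> y s)" "\<And>s. \<beta> 0 s = 0"
      "\<And>y. (\<Sum>s\<in>{1..p}. \<beta> y s *\<^sub>R V s) = y"
    using continuous_coordinates[OF _ span] by blast
  define \<gamma> where "\<gamma> = (\<Sum>s\<in>{1..k}. g s)"
  have "0 < \<gamma>"
    using blocks g(1) unfolding \<gamma>_def in_blocks_def by (intro sum_pos) auto
  define a where "a y s = g s / \<gamma> + \<beta> y s - (\<Sum>j\<in>{1..k}. \<beta> y j) / \<gamma> * g s" for y s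
  define U where "U = (\<Inter>s\<in>{1..p}. {y. 0 < a y s})"
  have "open U"
    unfolding U_def a_def using \<open>0 < \<gamma>\<close>
    by (intro open_INT ballI open_Collect_less continuous_intros \<beta>(1)) auto
  moreover have "0 \<in> U"
    using g(1) \<open>0 < \<gamma>\<close> by (simp add: U_def a_def \<beta>(2))
  moreover have "U \<subseteq> {x + y + z | x y z. x \<in> convex hull Gr \<and> y \<in> N1 \<and> z \<in> N2}"
  proof
    fix y assume "y \<in> U"
    have "(\<Sum>s\<in>{1..k}. a y s) = 1"
      using \<open>0 < \<gamma>\<close>
      by (simp add: a_def sum.distrib sum_subtractf sum_divide_distrib[symmetric]
          sum_distrib_left[symmetric] \<gamma>_def)
    moreover have "(\<Sum>s\<in>{1..p}. a y s *\<^sub>R V s) = y"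
    proof -
      define b where "b = (\<Sum>j\<in>{1..k}. \<beta> y j) / \<gamma>"
      have "(\<Sum>s\<in>{1..p}. a y s *\<^sub>R V s) =
          (\<Sum>s\<in>{1..p}. (1 / \<gamma>) *\<^sub>R (g s *\<^sub>R V s) + \<beta> y s *\<^sub>R V s - b *\<^sub>R (g s *\<^sub>R V s))"
        by (simp add: a_def b_def scaleR_add_left scaleR_diff_left)
      also have "\<dots> = (1 / \<gamma>) *\<^sub>R (\<Sum>s\<in>{1..p}. g s *\<^sub>R V s) + (\<Sum>s\<in>{1..p}. \<beta> y s *\<^sub>R V s)
          - b *\<^sub>R (\<Sum>s\<in>{1..p}. g s *\<^sub>R V s)"
        by (simp only: sum_subtractf sum.distrib scaleR_sum_right)
      finally show ?thesis
        using g(2) \<beta>(3)[of y] by simp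
    qed
    ultimately show "y \<in> {x + y + z | x y z. x \<in> convex hull Gr \<and> y \<in> N1 \<and> z \<in> N2}"
      using in_blocks_combination_mem[OF blocks N, of "a y"] \<open>y \<in> U\<close>
      by (auto simp: U_def less_imp_le)
  qed
  ultimately show ?thesis
    by (rule interiorI)
qed

lemma ex_bij_betw_blocks:
  assumes fin: "finite J0" "finite J1" "finite J2"
    and disj: "J0 \<inter> J1 = {}" "J0 \<inter> J2 = {}" "J1 \<inter> J2 = {}"
  obtains idx where "bij_betw idx {0<..card J0} J0" "bij_betw idx {card J0<..card J0 + card J1} J1"
    "bij_betw idx {card J0 + card J1<..card J0 + card J1 + card J2} J2"
    "bij_betw idx {1..card J0 + card J1 + card J2} (J0 \<union> J1 \<union> J2)"
proof -
  define k where "k = card J0"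
  define i where "i = k + card J1"
  define p where "p = i + card J2"
  have "k = 0 + card J0"
    by (simp add: k_def)
  then obtain h0 where "bij_betw h0 {0<..k} J0"
    using ex_bij_betw_greaterThanAtMost[OF fin(1)] by blast
  obtain h1 where "bij_betw h1 {k<..i} J1"
    using ex_bij_betw_greaterThanAtMost[OF fin(2) i_def] by blast
  obtain h2 where "bij_betw h2 {i<..p} J2"
    using ex_bij_betw_greaterThanAtMost[OF fin(3) p_def] by blast
  define idx where "idx s = (if s \<le> k then h0 s else if s \<le> i then h1 s else h2 s)" for s
  have idx: "bij_betw idx {0<..k} J0" "bij_betw idx {k<..i} J1" "bij_betw idx {i<..p} J2"
    by (rule bij_betw_cong[THEN iffD1, OF _ \<open>bij_betw h0 _ _\<close>], simp add: idx_def)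
      (rule bij_betw_cong[THEN iffD1, OF _ \<open>bij_betw h1 _ _\<close>], simp add: idx_def,
       rule bij_betw_cong[THEN iffD1, OF _ \<open>bij_betw h2 _ _\<close>], simp add: idx_def i_def)
  have "bij_betw idx (({0<..k} \<union> {k<..i}) \<union> {i<..p}) (J0 \<union> J1 \<union> J2)"
    by (intro bij_betw_combine idx) (use disj in auto)
  moreover have "({0<..k} \<union> {k<..i}) \<union> {i<..p} = {1..p}"
    by (auto simp: i_def p_def)
  ultimately show ?thesis
    using that idx by (simp add: k_def i_def p_def)
qed

lemma in_blocks_enumeration:
  fixes vec :: "'i \<Rightarrow> 'a::real_vector" and tag :: "'i \<Rightarrow> nat"
  assumes circ: "positive_circuit vec J c" and tag: "\<forall>j\<in>J. tag j < 3 \<and> vec j \<in> [A, B, C] ! tag j"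
    and tag_0: "\<exists>j\<in>J. tag j = 0"
  obtains V k i p g where "in_blocks V k i p A B C" "positive_circuit V {1..p} g"
proof -
  define J0 where "J0 = {j\<in>J. tag j = 0}"
  define J1 where "J1 = {j\<in>J. tag j = 1}"
  define J2 where "J2 = {j\<in>J. tag j = 2}"
  have "finite J"
    using circ by (simp add: positive_circuit_def)
  then have fin: "finite J0" "finite J1" "finite J2"
    by (simp_all add: J0_def J1_def J2_def)
  then obtain idx where idx: "bij_betw idx {0<..card J0} J0"
      "bij_betw idx {card J0<..card J0 + card J1} J1"
      "bij_betw idx {card J0 + card J1<..card J0 + card J1 + card J2} J2"
      "bij_betw idx {1..card J0 + card J1 + card J2} (J0 \<union> J1 \<union> J2)"
    by (rule ex_bij_betw_blocks) (auto simp: J0_def J1_def J2_def)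
  have "J0 \<union> J1 \<union> J2 = J"
    using tag by (auto simp: J0_def J1_def J2_def)
  then have "positive_circuit (vec \<circ> idx) {1..card J0 + card J1 + card J2} (c \<circ> idx)"
    using positive_circuit_reindex[OF idx(4)] circ by simp
  moreover have "vec (idx s) \<in> [A, B, C] ! t"
    if "bij_betw idx S Jt" "Jt = {j\<in>J. tag j = t}" "s \<in> S" for s S Jt t
  proof -
    have "idx s \<in> J" "tag (idx s) = t"
      using bij_betwE[OF that(1)] that(2,3) by auto
    then show ?thesis
      using tag by auto
  qed
  note in_block = this[OF idx(1) J0_def] this[OF idx(2) J1_def] this[OF idx(3) J2_def]
  have "1 \<le> card J0"
    using tag_0 fin(1) by (auto simp: J0_def Suc_le_eq card_gt_0_iff)
  then have "in_blocks (vec \<circ> idx) (card J0) (card J0 + card J1) (card J0 + card J1 + card J2) A B C"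
    using in_block by (auto simp: in_blocks_def)
  ultimately show ?thesis
    using that by blast
qed

text \<open>The tag \<open>fst j\<close> records from which of the three sets the vector \<open>snd j\<close> is taken; the
  same vector may belong to several of them.\<close>

lemma tagged_relation_if_zero_in_sum_set:
  fixes A B C :: "'a::real_vector set"
  assumes "0 \<in> {x + y + z | x y z. x \<in> convex hull A \<and> y \<in> conic_hull B \<and> z \<in> conic_hull C}"
  obtains I :: "(nat \<times> 'a) set" and w where "finite I" "\<forall>j\<in>I. fst j < 3 \<and> snd j \<in> [A, B, C] ! fst j"
    "\<forall>j\<in>I. 0 \<le> w j" "(\<Sum>j\<in>I. w j *\<^sub>R snd j) = 0" "\<exists>j\<in>I. fst j = 0 \<and> 0 < w j"
proof -
  from assms obtain a b c where abc: "a \<in> convex hull A" "b \<in> conic_hull B" "c \<in> conic_hull C"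
      "0 = a + b + c"
    by blast
  obtain S u where S: "finite S" "S \<subseteq> A" "\<forall>v\<in>S. 0 \<le> u v" "sum u S = 1" "(\<Sum>v\<in>S. u v *\<^sub>R v) = a"
    using abc(1) unfolding convex_hull_explicit by blast
  obtain T2 c2 where T2: "finite T2" "T2 \<subseteq> B" "\<forall>v\<in>T2. 0 \<le> c2 v" "b = (\<Sum>v\<in>T2. c2 v *\<^sub>R v)"
    using abc(2) unfolding conic_hull_def by blast
  obtain T3 c3 where T3: "finite T3" "T3 \<subseteq> C" "\<forall>v\<in>T3. 0 \<le> c3 v" "c = (\<Sum>v\<in>T3. c3 v *\<^sub>R v)"
    using abc(3) unfolding conic_hull_def by blast
  define I where "I = (Pair (0::nat) ` S \<union> Pair 1 ` T2) \<union> Pair 2 ` T3"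
  define w where "w j = (if fst j = 0 then u (snd j) else if fst j = 1 then c2 (snd j) else c3 (snd j))"
    for j :: "nat \<times> 'a"
  have "(\<Sum>j\<in>I. w j *\<^sub>R snd j) =
      (\<Sum>j\<in>Pair 0 ` S \<union> Pair 1 ` T2. w j *\<^sub>R snd j) + (\<Sum>j\<in>Pair 2 ` T3. w j *\<^sub>R snd j)"
    unfolding I_def by (rule sum.union_disjoint) (use S(1) T2(1) T3(1) in auto)
  also have "(\<Sum>j\<in>Pair 0 ` S \<union> Pair 1 ` T2. w j *\<^sub>R snd j) =
      (\<Sum>j\<in>Pair 0 ` S. w j *\<^sub>R snd j) + (\<Sum>j\<in>Pair 1 ` T2. w j *\<^sub>R snd j)"
    by (rule sum.union_disjoint) (use S(1) T2(1) in auto)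
  also have "(\<Sum>j\<in>Pair 0 ` S. w j *\<^sub>R snd j) = a"
    using S(5) by (simp add: sum.reindex inj_on_def w_def)
  also have "(\<Sum>j\<in>Pair 1 ` T2. w j *\<^sub>R snd j) = b"
    using T2(4) by (simp add: sum.reindex inj_on_def w_def)
  also have "(\<Sum>j\<in>Pair 2 ` T3. w j *\<^sub>R snd j) = c"
    using T3(4) by (simp add: sum.reindex inj_on_def w_def)
  finally have "(\<Sum>j\<in>I. w j *\<^sub>R snd j) = 0"
    using abc(4) by simp
  moreover obtain v where "v \<in> S" "u v \<noteq> 0"
    using sum.not_neutral_contains_not_neutral[of u S] S(4) by auto
  then have "0 < u v"
    using S(3) by force
  with \<open>v \<in> S\<close> have "\<exists>j\<in>I. fst j = 0 \<and> 0 < w j"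
    by (intro bexI[of _ "(0, v)"]) (auto simp: I_def w_def)
  moreover have "finite I" "\<forall>j\<in>I. fst j < 3 \<and> snd j \<in> [A, B, C] ! fst j" "\<forall>j\<in>I. 0 \<le> w j"
    using S T2 T3 by (auto simp: I_def w_def)
  ultimately show ?thesis
    using that by blast
qed

lemma alternance_if_zero_in_sum_set:
  fixes Gr eta nA Z :: "(real^'n::finite) set"
  assumes Z: "finite Z" "card Z = CARD('n)" "independent Z"
    and zero: "0 \<in> {x + y + z | x y z. x \<in> convex hull Gr \<and> y \<in> conic_hull eta \<and> z \<in> conic_hull nA}"
  shows "\<exists>p\<in>{1..CARD('n)+1}. alternance Gr eta nA Z p"
proof -
  obtain I :: "(nat \<times> (real^'n)) set" and w where I: "finite I" "\<forall>j\<in>I. fst j < 3 \<and> snd j \<in> [Gr, eta, nA] ! fst j"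
      "\<forall>j\<in>I. 0 \<le> w j" "(\<Sum>j\<in>I. w j *\<^sub>R snd j) = 0" "\<exists>j\<in>I. fst j = 0 \<and> 0 < w j"
    using tagged_relation_if_zero_in_sum_set[OF zero] by blast
  then obtain j1 where j1: "j1 \<in> I" "fst j1 = 0" "0 < w j1"
    by blast
  obtain J c where J: "J \<subseteq> I" "\<exists>j\<in>J. fst j = 0" "positive_circuit snd J c"
    by (rule exists_positive_circuit[OF I(1,3,4) j1(1), where Q = "\<lambda>j. fst j = 0", OF j1(2,3)])
  have tags: "\<forall>j\<in>J. fst j < 3 \<and> snd j \<in> [Gr, eta, nA] ! fst j"
    using J(1) I(2) by blast
  obtain V0 k i p g where blocks: "in_blocks V0 k i p Gr eta nA" and circ: "positive_circuit V0 {1..p} g"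
    by (rule in_blocks_enumeration[OF J(3) tags J(2)])
  then have p: "1 \<le> p"
    by (simp add: in_blocks_def)
  obtain V where V: "p \<le> CARD('n)+1" "\<forall>s\<in>{1..p}. V s = V0 s" "\<forall>s\<in>{p<..CARD('n)+1}. V s \<in> Z"
      "sign_alternating (Delta V) p" "\<forall>s\<in>{p<..CARD('n)+1}. Delta V s = 0"
    by (rule sign_alternating_extension[OF circ p Z])
  have "in_blocks V k i p Gr eta nA"
    using blocks V(2) unfolding in_blocks_def by simp
  then have "alternance Gr eta nA Z p"
    unfolding alternance_iff using V(3-5) by (intro exI[of _ k] exI[of _ i] exI[of _ V]) simp
  then show ?thesis
    using V(1) p by auto
qed

lemma zero_in_sum_set_if_alternance:
  fixes Gr eta nA Z :: "(real^'n::finite) set"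
  assumes alt: "alternance Gr eta nA Z p" and p: "p \<in> {1..CARD('n)+1}"
    and N: "convex_cone N1" "convex_cone N2" "eta \<subseteq> N1" "nA \<subseteq> N2"
  shows "0 \<in> {x + y + z | x y z. x \<in> convex hull Gr \<and> y \<in> N1 \<and> z \<in> N2}"
proof -
  obtain k i V where blocks: "in_blocks V k i p Gr eta nA" and "sign_alternating (Delta V) p"
      "\<forall>s\<in>{p<..CARD('n)+1}. Delta V s = 0"
    using alt by (auto simp: alternance_iff)
  then obtain g where "\<forall>s\<in>{1..p}. 0 < g s" "(\<Sum>s\<in>{1..p}. g s *\<^sub>R V s) = 0"
    using positive_relation_if_sign_alternating[OF p] by blast
  then show ?thesis
    by (rule zero_in_sum_set_if_positive_relation[OF in_blocks_mono[OF blocks N(3,4)] N(1,2)])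
qed

lemma zero_in_interior_if_complete_alternance:
  fixes Gr eta nA Z :: "(real^'n::finite) set"
  assumes alt: "alternance Gr eta nA Z (CARD('n)+1)"
    and N: "convex_cone N1" "convex_cone N2" "eta \<subseteq> N1" "nA \<subseteq> N2"
  shows "0 \<in> interior {x + y + z | x y z. x \<in> convex hull Gr \<and> y \<in> N1 \<and> z \<in> N2}"
proof -
  obtain k i V where blocks: "in_blocks V k i (CARD('n)+1) Gr eta nA"
      and alt_V: "sign_alternating (Delta V) (CARD('n)+1)"
    using alt by (auto simp: alternance_iff)
  then obtain g where "\<forall>s\<in>{1..CARD('n)+1}. 0 < g s" "(\<Sum>s\<in>{1..CARD('n)+1}. g s *\<^sub>R V s) = 0"
    using positive_relation_if_sign_alternating[of "CARD('n)+1" V] by auto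
  moreover have "span (V ` {1..CARD('n)+1}) = UNIV"
  proof -
    have "Delta V 1 \<noteq> 0"
      using alt_V by (simp add: sign_alternating_def)
    then have "span (V ` ({1..CARD('n)+1} - {1})) = UNIV"
      using Delta_neq_0_iff_span[of 1 V] by simp
    moreover have "V ` ({1..CARD('n)+1} - {1}) \<subseteq> V ` {1..CARD('n)+1}"
      by auto
    ultimately show ?thesis
      using span_mono by blast
  qed
  ultimately show ?thesis
    by (rule zero_in_interior_sum_set[OF in_blocks_mono[OF blocks N(3,4)] N(1,2)])
qed

lemma convex_hull_neq_0_if_complete_alternance:
  fixes Gr eta nA Z :: "(real^'n::finite) set"
  assumes alt: "alternance Gr eta nA Z (CARD('n)+1)"
  shows "convex hull Gr \<noteq> {0}"
proof
  assume hull: "convex hull Gr = {0}"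
  obtain k i V where "in_blocks V k i (CARD('n)+1) Gr eta nA"
      and alt_V: "sign_alternating (Delta V) (CARD('n)+1)"
    using alt by (auto simp: alternance_iff)
  then have "V 1 \<in> convex hull Gr"
    by (auto simp: in_blocks_def intro: hull_inc)
  then have "V 1 - 0 *\<^sub>R V 2 \<in> span (V ` ({2..CARD('n)+1} - {2}))"
    using hull by (simp add: span_zero)
  moreover have "2 \<in> {2..CARD('n)+1}" "Delta V 1 \<noteq> 0" "Delta V 2 \<noteq> 0"
    using alt_V by (auto simp: sign_alternating_def)
  ultimately show False
    using Delta_eq_0_iff_coeff[of 2 V 0] by simp
qed

theorem theorem6:
  fixes A :: "(real^'n) set"
    and K :: "'y::banach set"
    and W :: "'w::t2_space set"
    and f :: "real^'n \<Rightarrow> 'w \<Rightarrow> real"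
    and grad :: "real^'n \<Rightarrow> 'w \<Rightarrow> real^'n"
    and G :: "real^'n \<Rightarrow> 'y"
    and DG :: "real^'n \<Rightarrow> ((real^'n) \<Rightarrow>\<^sub>L 'y)"
    and Z eta nA :: "(real^'n) set"
    and xs :: "real^'n"
  assumes A: "A \<noteq> {}" "closed A" "convex A"
    and K: "K \<noteq> {}" "closed K" "convex K" "cone K"
    and W: "W \<noteq> {}" "compact W"
    and f_deriv: "\<And>x w. w \<in> W \<Longrightarrow> ((\<lambda>y. f y w) has_derivative (\<lambda>h. grad x w \<bullet> h)) (at x)"
    and f_cont: "continuous_on (UNIV \<times> W) (\<lambda>(x, w). f x w)"
    and grad_cont: "continuous_on (UNIV \<times> W) (\<lambda>(x, w). grad x w)"
    and G_deriv: "\<And>x. (G has_derivative blinfun_apply (DG x)) (at x)"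
    and DG_cont: "continuous_on UNIV DG"
    and Z: "finite Z" "card Z = CARD('n)" "independent Z"
    and eta: "eta \<subseteq> Ncone G DG K xs" "conic_hull eta = Ncone G DG K xs"
    and nA: "nA \<subseteq> normal_cone A xs" "conic_hull nA = normal_cone A xs"
    and feasible: "G xs \<in> K" "xs \<in> A"
  defines "D \<equiv> {a + b + c | a b c. a \<in> subdiffF f grad W xs \<and> b \<in> Ncone G DG K xs \<and> c \<in> normal_cone A xs}"
  shows "(0 \<in> D \<longleftrightarrow> (\<exists>p\<in>{1..CARD('n)+1}. alternance (active_grads f grad W xs) eta nA Z p))
       \<and> (alternance (active_grads f grad W xs) eta nA Z (CARD('n)+1)
            \<longrightarrow> 0 \<in> interior D \<and> subdiffF f grad W xs \<noteq> {0})"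
proof -
  let ?Gr = "active_grads f grad W xs"
  have D_eq: "D = {x + y + z | x y z. x \<in> convex hull ?Gr \<and> y \<in> Ncone G DG K xs \<and> z \<in> normal_cone A xs}"
    unfolding D_def subdiffF_def ..
  note cones = convex_cone_Ncone convex_cone_normal_cone eta(1) nA(1)
  have "0 \<in> D \<longleftrightarrow> (\<exists>p\<in>{1..CARD('n)+1}. alternance ?Gr eta nA Z p)"
  proof
    assume "0 \<in> D"
    then show "\<exists>p\<in>{1..CARD('n)+1}. alternance ?Gr eta nA Z p"
      unfolding D_eq eta(2)[symmetric] nA(2)[symmetric] by (rule alternance_if_zero_in_sum_set[OF Z])
  next
    assume "\<exists>p\<in>{1..CARD('n)+1}. alternance ?Gr eta nA Z p"
    then show "0 \<in> D"
      unfolding D_eq using zero_in_sum_set_if_alternance[OF _ _ cones] by blast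
  qed
  moreover have "alternance ?Gr eta nA Z (CARD('n)+1) \<longrightarrow> 0 \<in> interior D \<and> subdiffF f grad W xs \<noteq> {0}"
    unfolding D_eq subdiffF_def
    using zero_in_interior_if_complete_alternance[OF _ cones] convex_hull_neq_0_if_complete_alternance
    by blast
  ultimately show ?thesis
    by blast
qed

end
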